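(* For every real $x\ge6$, $$\sum_{n>x}\frac{1}{n\,\varphi(n)}<\frac{2.1}{x}.$$
   Context: $\varphi$ is Euler's totient function; the sum is over integers $n>x$. *)

theory Defs
  imports "HOL-Analysis.Analysis" "HOL-Number_Theory.Number_Theory"
begin

end

theory Submission
  imports Defs
begin

(* For n > 0 one has n / \<phi>(n) = \<Sum> 1 / \<phi>(d) over the squarefree divisors d of n, written here
   as a sum over sets S of primes with d = \<Prod>S.  Inserting this into
   \<Sum>_{n>x} 1/(n \<phi>(n)) = \<Sum>_{n>x} (1/n^2) (n/\<phi>(n)) and swapping the sums leaves, for each d,
   the sum of 1/n^2 over the multiples n > x of d, which is at most 1/(d x) + 1/x^2 if d \<le> x
   and at most 2/(d x) otherwise.  Weighted by 1/\<phi>(d), the terms 1/(d x) add up to at most E/x,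
   where E = \<Prod>_p (1 + 1/(p (p - 1))) < 1.96; the terms 1/x^2 to at most
   (\<Sum>_{n\<le>x} 1/\<phi>(n)) / x^2 \<le> E H(x) / x^2 with H the harmonic number; and the extra terms
   1/(d x) with d > x to at most I(x)/x, where I(x) is the tail itself.  Hence
   I(x) (x - 1) \<le> E (1 + H(x)/x), which proves the claim for x \<ge> 128 and bounds I(128); for
   6 \<le> x < 128 the terms with n \<le> 128 are summed exactly. *)

definition recip_n_totient :: "nat \<Rightarrow> real" where
  "recip_n_totient n = 1 / (real n * real (totient n))"

definition prime_set_weight :: "nat set \<Rightarrow> real" where
  "prime_set_weight S = (\<Prod>p\<in>S. 1 / (real p - 1))"

lemma prime_set_weight_nonneg: "(\<And>p. p \<in> S \<Longrightarrow> prime p) \<Longrightarrow> prime_set_weight S \<ge> 0"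
  unfolding prime_set_weight_def by (intro prod_nonneg) (auto simp: prime_ge_Suc_0_nat)

lemma real_div_totient_eq_prod:
  assumes "n > 0"
  shows "real n / real (totient n) = (\<Prod>p\<in>prime_factors n. real p / (real p - 1))"
proof -
  have "real n / real (totient n) = inverse (\<Prod>p\<in>prime_factors n. 1 - 1 / real p)"
    using assms by (simp add: totient_formula2 inverse_eq_divide)
  also have "\<dots> = (\<Prod>p\<in>prime_factors n. inverse (1 - 1 / real p))"
    using prod_inversef[of "\<lambda>p. 1 - 1 / real p" "prime_factors n"] by (simp add: o_def)
  also have "\<dots> = (\<Prod>p\<in>prime_factors n. real p / (real p - 1))"
  proof (intro prod.cong refl)
    fix p assume "p \<in> prime_factors n"
    then have "real p > 1"
      by (simp add: prime_factors_multiplicity prime_gt_Suc_0_nat)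
    then show "inverse (1 - 1 / real p) = real p / (real p - 1)"
      by (simp add: field_simps)
  qed
  finally show ?thesis .
qed

lemma real_div_totient_eq_sum_weights:
  assumes "n > 0"
  shows "real n / real (totient n) = (\<Sum>S\<in>Pow (prime_factors n). prime_set_weight S)"
proof -
  have "real n / real (totient n) = (\<Prod>p\<in>prime_factors n. 1 / (real p - 1) + 1)"
    unfolding real_div_totient_eq_prod[OF assms]
  proof (intro prod.cong refl)
    fix p assume "p \<in> prime_factors n"
    then have "real p > 1"
      by (simp add: prime_factors_multiplicity prime_gt_Suc_0_nat)
    then show "real p / (real p - 1) = 1 / (real p - 1) + 1"
      by (simp add: field_simps)
  qed
  also have "\<dots> = (\<Sum>S\<in>Pow (prime_factors n). prime_set_weight S)"
    by (subst prod_add) (auto simp: prime_set_weight_def)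
  finally show ?thesis .
qed

lemma
  fixes S :: "nat set"
  assumes "finite S" "\<And>p. p \<in> S \<Longrightarrow> prime p"
  shows prime_factors_Prod_primes: "prime_factors (\<Prod>S) = S"
    and totient_Prod_primes: "real (totient (\<Prod>S)) = (\<Prod>p\<in>S. real p - 1)"
proof -
  have "prime_factors (\<Prod>S) = (\<Union>p\<in>S. prime_factors p)"
    using assms by (subst prime_factors_prod) (auto simp: o_def, metis not_prime_0)
  also have "\<dots> = S"
    using assms by (auto simp: prime_prime_factors)
  finally show pf: "prime_factors (\<Prod>S) = S" .
  have "real (totient (\<Prod>S)) = (\<Prod>p\<in>S. real p) * (\<Prod>p\<in>S. 1 - 1 / real p)"
    using totient_formula2[of "\<Prod>S"] pf by simp
  also have "\<dots> = (\<Prod>p\<in>S. real p - 1)"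
    unfolding prod.distrib[symmetric]
    using assms by (intro prod.cong refl) (auto simp: field_simps prime_gt_0_nat)
  finally show "real (totient (\<Prod>S)) = (\<Prod>p\<in>S. real p - 1)" .
qed

lemma prime_set_weight_eq:
  assumes "finite S" "\<And>p. p \<in> S \<Longrightarrow> prime p"
  shows "prime_set_weight S = 1 / real (totient (\<Prod>S))"
proof -
  have "prime_set_weight S = 1 / (\<Prod>p\<in>S. real p - 1)"
    unfolding prime_set_weight_def by (simp add: prod_dividef)
  then show ?thesis
    using totient_Prod_primes[OF assms] by simp
qed

lemma recip_n_totient_Prod_primes:
  assumes "finite S" "\<And>p. p \<in> S \<Longrightarrow> prime p"
  shows "recip_n_totient (\<Prod>S) = prime_set_weight S / real (\<Prod>S)"
  using prime_set_weight_eq[OF assms] by (simp add: recip_n_totient_def)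

lemma finite_primes_le [simp]: "finite {p::nat. prime p \<and> p \<le> N}"
  by (rule finite_subset[of _ "{..N}"]) auto

lemma subset_primes_leD:
  assumes "S \<subseteq> {p::nat. prime p \<and> p \<le> N}"
  shows "finite S" "\<And>p. p \<in> S \<Longrightarrow> prime p" "0 < \<Prod>S"
proof -
  show "finite S"
    using assms finite_primes_le[of N] by (rule finite_subset)
  show prime: "prime p" if "p \<in> S" for p
    using assms that by auto
  show "0 < \<Prod>S"
    by (intro prod_pos) (simp add: prime prime_gt_0_nat)
qed

lemma inj_on_Prod_prime_sets: "inj_on Prod (Pow {p::nat. prime p \<and> p \<le> N})"
proof
  fix S T assume "S \<in> Pow {p. prime p \<and> p \<le> N}" "T \<in> Pow {p. prime p \<and> p \<le> N}" "\<Prod>S = \<Prod>T"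
  moreover have "finite S" "finite T"
    using calculation finite_primes_le[of N] by (auto intro: finite_subset)
  ultimately show "S = T"
    using prime_factors_Prod_primes[of S] prime_factors_Prod_primes[of T] by auto
qed

lemma Prod_primes_dvd_iff:
  fixes n :: nat
  assumes "n > 0" "finite S" "\<And>p. p \<in> S \<Longrightarrow> prime p"
  shows "\<Prod>S dvd n \<longleftrightarrow> S \<subseteq> prime_factors n"
proof
  assume "\<Prod>S dvd n"
  then show "S \<subseteq> prime_factors n"
    using assms by (auto simp: prime_factors_dvd intro: dvd_trans[OF dvd_prodI])
next
  assume "S \<subseteq> prime_factors n"
  then have "\<Prod>S dvd (\<Prod>p\<in>prime_factors n. p)"
    by (intro prod_dvd_prod_subset) auto
  also have "\<dots> dvd (\<Prod>p\<in>prime_factors n. p ^ multiplicity p n)"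
    by (intro prod_dvd_prod) (auto simp: prime_factors_multiplicity)
  also have "\<dots> = n"
    using assms(1) by (simp add: prod_prime_factors)
  finally show "\<Prod>S dvd n" .
qed

lemma sum_mult_ratio_totient_eq:
  fixes g :: "nat \<Rightarrow> real"
  assumes F: "finite F" "\<And>n. n \<in> F \<Longrightarrow> 0 < n \<and> n \<le> N"
  shows "(\<Sum>n\<in>F. g n * (real n / real (totient n))) =
         (\<Sum>S\<in>Pow {p. prime p \<and> p \<le> N}. prime_set_weight S * (\<Sum>n\<in>{n\<in>F. \<Prod>S dvd n}. g n))"
proof -
  let ?Q = "{p. prime p \<and> p \<le> N}"
  have "(\<Sum>n\<in>F. g n * (real n / real (totient n))) =
        (\<Sum>n\<in>F. \<Sum>S\<in>Pow ?Q. if \<Prod>S dvd n then g n * prime_set_weight S else 0)"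
  proof (intro sum.cong refl)
    fix n assume n: "n \<in> F"
    have pf: "prime_factors n \<subseteq> ?Q"
      using F(2)[OF n] by (auto simp: prime_factors_dvd dest: dvd_imp_le)
    have Pow_eq: "{S \<in> Pow ?Q. \<Prod>S dvd n} = Pow (prime_factors n)"
    proof -
      have "\<Prod>S dvd n \<longleftrightarrow> S \<subseteq> prime_factors n" if "S \<subseteq> ?Q" for S
        using that F(2)[OF n] finite_primes_le[of N]
        by (intro Prod_primes_dvd_iff) (auto intro: finite_subset)
      then show ?thesis
        using pf by auto
    qed
    have "g n * (real n / real (totient n)) = (\<Sum>S\<in>Pow (prime_factors n). g n * prime_set_weight S)"
      using F(2)[OF n] by (simp add: real_div_totient_eq_sum_weights sum_distrib_left)
    also have "\<dots> = (\<Sum>S\<in>{S\<in>Pow ?Q. \<Prod>S dvd n}. g n * prime_set_weight S)"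
      by (simp only: Pow_eq)
    also have "\<dots> = (\<Sum>S\<in>Pow ?Q. if \<Prod>S dvd n then g n * prime_set_weight S else 0)"
      by (rule sum.inter_filter) simp
    finally show "g n * (real n / real (totient n)) = \<dots>" .
  qed
  also have "\<dots> = (\<Sum>S\<in>Pow ?Q. \<Sum>n\<in>F. if \<Prod>S dvd n then g n * prime_set_weight S else 0)"
    by (rule sum.swap)
  also have "\<dots> = (\<Sum>S\<in>Pow ?Q. prime_set_weight S * (\<Sum>n\<in>{n\<in>F. \<Prod>S dvd n}. g n))"
    using F(1) by (intro sum.cong refl) (simp add: sum.inter_filter[symmetric] sum_distrib_left mult.commute)
  finally show ?thesis .
qed

lemma sum_multiples_eq:
  fixes g :: "nat \<Rightarrow> 'a::comm_monoid_add"
  assumes "d > 0"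
  shows "(\<Sum>n\<in>{n\<in>F. d dvd n}. g n) = (\<Sum>m\<in>(\<lambda>m. d * m) -` F. g (d * m))"
proof -
  have multiples: "{n\<in>F. d dvd n} = (\<lambda>m. d * m) ` ((\<lambda>m. d * m) -` F)"
    by auto
  have "inj_on (\<lambda>m. d * m) ((\<lambda>m. d * m) -` F)"
    using assms by (auto simp: inj_on_def)
  then show ?thesis
    unfolding multiples by (simp only: sum.reindex o_def)
qed

lemma sum_inverse_squares_atLeastAtMost:
  assumes "1 \<le> k" "k \<le> K"
  shows "(\<Sum>m=k..K. 1 / real m ^ 2) \<le> 1 / real k ^ 2 + 1 / real k - 1 / real K"
  using assms(2)
proof (induction K rule: dec_induct)
  case (step K)
  have K: "real K \<ge> 1"
    using assms step by simp
  have "real K * (real K + 1) \<le> real (Suc K) ^ 2"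
    by (simp add: power2_eq_square algebra_simps)
  then have "1 / real (Suc K) ^ 2 \<le> 1 / (real K * (real K + 1))"
    using K by (intro divide_left_mono) auto
  also have "\<dots> = 1 / real K - 1 / real (Suc K)"
    using K by (simp add: field_simps)
  finally show ?case
    using step by (simp add: sum.cl_ivl_Suc)
qed simp

lemma sum_inverse_squares_greater:
  assumes "y > 0" "finite M" "\<And>m. m \<in> M \<Longrightarrow> y < real m"
  shows "(\<Sum>m\<in>M. 1 / real m ^ 2) \<le> 1 / y + (if 1 \<le> y then 1 / y ^ 2 else 1 / y)"
proof (cases "M = {}")
  case False
  define k where "k = nat \<lfloor>y\<rfloor> + 1"
  have ky: "y < real k" and k1: "1 \<le> k"
    using assms(1) by (simp_all add: k_def) linarith
  have M: "M \<subseteq> {k..Max M}"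
  proof
    fix m assume "m \<in> M"
    then have "y < real m" "m \<le> Max M"
      using assms by auto
    then have "\<lfloor>y\<rfloor> < int m" "0 \<le> \<lfloor>y\<rfloor>"
      using assms(1) by (simp_all add: floor_less_iff)
    then show "m \<in> {k..Max M}"
      using \<open>m \<le> Max M\<close> unfolding k_def by (simp add: Suc_le_eq nat_less_iff)
  qed
  then have "(\<Sum>m\<in>M. 1 / real m ^ 2) \<le> (\<Sum>m=k..Max M. 1 / real m ^ 2)"
    by (intro sum_mono2) auto
  also have "\<dots> \<le> 1 / real k ^ 2 + 1 / real k - 1 / real (Max M)"
    using M False by (intro sum_inverse_squares_atLeastAtMost[OF k1]) auto
  also have "\<dots> \<le> 1 / real k ^ 2 + 1 / real k"
    by simp
  also have "\<dots> \<le> 1 / y + (if 1 \<le> y then 1 / y ^ 2 else 1 / y)"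
  proof -
    have "1 / real k \<le> 1 / y" "1 / real k ^ 2 \<le> 1 / y ^ 2"
      using ky assms(1) by (auto intro!: divide_left_mono power_strict_mono[THEN less_imp_le] mult_pos_pos)
    moreover have "1 / real k ^ 2 \<le> 1 / real k"
      using k1 by (simp add: power2_eq_square divide_le_eq)
    ultimately show ?thesis
      by auto
  qed
  finally show ?thesis .
qed (use assms in simp)

lemma sum_inverse_squares_multiples:
  assumes "x > 0" "d > 0" "finite F" "\<And>n. n \<in> F \<Longrightarrow> x < real n"
  shows "(\<Sum>n\<in>{n\<in>F. d dvd n}. 1 / real n ^ 2)
           \<le> 1 / (real d * x) + (if real d \<le> x then 1 / x ^ 2 else 1 / (real d * x))"
proof -
  let ?M = "(\<lambda>m. d * m) -` F"
  have "finite ?M"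
    using assms by (intro finite_vimageI) (auto simp: inj_on_def)
  moreover have "x / real d < real m" if "m \<in> ?M" for m
  proof -
    have "x < real d * real m"
      using assms(4)[of "d * m"] that by simp
    then show ?thesis
      using assms(2) by (simp add: field_simps)
  qed
  ultimately have M: "(\<Sum>m\<in>?M. 1 / real m ^ 2)
      \<le> 1 / (x / real d) + (if 1 \<le> x / real d then 1 / (x / real d) ^ 2 else 1 / (x / real d))"
    using assms(1,2) by (intro sum_inverse_squares_greater) auto
  have "(\<Sum>n\<in>{n\<in>F. d dvd n}. 1 / real n ^ 2) = (\<Sum>m\<in>?M. 1 / real m ^ 2) / real d ^ 2"
    by (simp add: sum_multiples_eq[OF assms(2)] sum_divide_distrib power_mult_distrib mult.commute)
  also have "\<dots> \<le> (1 / (x / real d) + (if 1 \<le> x / real d then 1 / (x / real d) ^ 2 else 1 / (x / real d)))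
                    / real d ^ 2"
    using M by (intro divide_right_mono) auto
  also have "\<dots> = 1 / (real d * x) + (if real d \<le> x then 1 / x ^ 2 else 1 / (real d * x))"
    using assms(1,2) by (simp add: field_simps power2_eq_square)
  finally show ?thesis .
qed

definition euler_product :: "nat \<Rightarrow> real" where
  "euler_product N = (\<Prod>p\<in>{p. prime p \<and> p \<le> N}. 1 + 1 / (real p * (real p - 1)))"

lemma euler_product_eq_sum:
  "euler_product N = (\<Sum>S\<in>Pow {p. prime p \<and> p \<le> N}. prime_set_weight S / real (\<Prod>S))"
proof -
  have "prime_set_weight S / real (\<Prod>S) = (\<Prod>p\<in>S. 1 / (real p * (real p - 1)))" for S
    unfolding prime_set_weight_def of_nat_prod prod_dividef[symmetric] by (simp add: mult.commute)
  moreover have "euler_product N = (\<Prod>p\<in>{p. prime p \<and> p \<le> N}. 1 / (real p * (real p - 1)) + 1)"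
    unfolding euler_product_def by (simp add: add.commute)
  ultimately show ?thesis
    by (subst (asm) prod_add) simp_all
qed

lemma sum_recip_n_totient_le:
  assumes x: "x > 0" and F: "finite F" "\<And>n. n \<in> F \<Longrightarrow> x < real n \<and> n \<le> N"
  defines "Q \<equiv> Pow {p. prime p \<and> p \<le> N}"
  shows "(\<Sum>n\<in>F. recip_n_totient n) \<le> euler_product N / x
           + (\<Sum>S\<in>Q \<inter> {S. real (\<Prod>S) \<le> x}. prime_set_weight S) / x ^ 2
           + (\<Sum>S\<in>Q \<inter> {S. x < real (\<Prod>S)}. prime_set_weight S / real (\<Prod>S)) / x"
proof -
  have pos: "0 < n" if "n \<in> F" for n
    using F(2)[OF that] x by (cases n) auto
  have Q: "finite S" "\<And>p. p \<in> S \<Longrightarrow> prime p" "0 < \<Prod>S" if "S \<in> Q" for S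
    using that subset_primes_leD unfolding Q_def by auto
  have "(\<Sum>n\<in>F. recip_n_totient n) = (\<Sum>n\<in>F. 1 / real n ^ 2 * (real n / real (totient n)))"
    using pos by (intro sum.cong refl) (simp add: recip_n_totient_def field_simps power2_eq_square)
  also have "\<dots> = (\<Sum>S\<in>Q. prime_set_weight S * (\<Sum>n\<in>{n\<in>F. \<Prod>S dvd n}. 1 / real n ^ 2))"
    unfolding Q_def using F pos by (intro sum_mult_ratio_totient_eq) auto
  also have "\<dots> \<le> (\<Sum>S\<in>Q. prime_set_weight S * (1 / (real (\<Prod>S) * x)
      + (if real (\<Prod>S) \<le> x then 1 / x ^ 2 else 1 / (real (\<Prod>S) * x))))"
    using Q F x by (intro sum_mono mult_left_mono sum_inverse_squares_multiples prime_set_weight_nonneg) auto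
  also have "\<dots> = (\<Sum>S\<in>Q. prime_set_weight S / real (\<Prod>S)) / x
      + (\<Sum>S\<in>Q. if real (\<Prod>S) \<le> x then prime_set_weight S / x ^ 2
                   else prime_set_weight S / real (\<Prod>S) / x)"
    unfolding sum.distrib[symmetric] sum_divide_distrib
    by (intro sum.cong refl) (simp add: distrib_left del: of_nat_prod)
  also have "\<dots> = euler_product N / x
      + (\<Sum>S\<in>Q \<inter> {S. real (\<Prod>S) \<le> x}. prime_set_weight S) / x ^ 2
      + (\<Sum>S\<in>Q \<inter> {S. x < real (\<Prod>S)}. prime_set_weight S / real (\<Prod>S)) / x"
  proof -
    have "finite Q"
      unfolding Q_def by simp
    moreover have "- {S. real (\<Prod>S) \<le> x} = {S. x < real (\<Prod>S)}"
      by auto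
    ultimately show ?thesis
      unfolding euler_product_eq_sum Q_def[symmetric] sum_divide_distrib
      by (simp only: sum.If_cases add.assoc)
  qed
  finally show ?thesis .
qed

lemma sum_weights_le_sum_inverse_totient:
  "(\<Sum>S\<in>Pow {p. prime p \<and> p \<le> N} \<inter> {S. real (\<Prod>S) \<le> x}. prime_set_weight S)
     \<le> (\<Sum>n=1..nat \<lfloor>x\<rfloor>. 1 / real (totient n))"
proof -
  let ?A = "Pow {p. prime p \<and> p \<le> N} \<inter> {S. real (\<Prod>S) \<le> x}"
  have "(\<Sum>S\<in>?A. prime_set_weight S) = (\<Sum>S\<in>?A. 1 / real (totient (\<Prod>S)))"
    by (intro sum.cong refl prime_set_weight_eq) (auto dest: subset_primes_leD)
  also have "\<dots> = (\<Sum>n\<in>Prod ` ?A. 1 / real (totient n))"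
    using inj_on_subset[OF inj_on_Prod_prime_sets, of ?A N] by (simp add: sum.reindex)
  also have "\<dots> \<le> (\<Sum>n=1..nat \<lfloor>x\<rfloor>. 1 / real (totient n))"
    by (intro sum_mono2) (auto simp: le_nat_floor Suc_le_eq dest: subset_primes_leD)
  finally show ?thesis .
qed

lemma sum_inverse_multiples_le:
  assumes "d > 0"
  shows "(\<Sum>n\<in>{n\<in>{1..K}. d dvd n}. 1 / real n) \<le> harm K / real d"
proof -
  let ?M = "(\<lambda>m. d * m) -` {1..K}"
  have M: "?M \<subseteq> {1..K}"
  proof
    fix m assume "m \<in> ?M"
    then have "1 \<le> d * m" "d * m \<le> K"
      by auto
    moreover have "m \<le> d * m"
      using assms by simp
    ultimately show "m \<in> {1..K}"
      by (cases m) auto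
  qed
  have "(\<Sum>n\<in>{n\<in>{1..K}. d dvd n}. 1 / real n) = (\<Sum>m\<in>?M. 1 / real m) / real d"
    unfolding sum_multiples_eq[OF assms] sum_divide_distrib by (intro sum.cong refl) simp
  also have "\<dots> \<le> (\<Sum>m=1..K. 1 / real m) / real d"
    using M by (intro divide_right_mono sum_mono2) auto
  also have "\<dots> = harm K / real d"
    by (simp add: harm_def inverse_eq_divide)
  finally show ?thesis .
qed

lemma sum_inverse_totient_le: "(\<Sum>n=1..K. 1 / real (totient n)) \<le> euler_product K * harm K"
proof -
  let ?Q = "Pow {p. prime p \<and> p \<le> K}"
  have "(\<Sum>n=1..K. 1 / real (totient n)) = (\<Sum>n=1..K. 1 / real n * (real n / real (totient n)))"
    by (intro sum.cong refl) auto
  also have "\<dots> = (\<Sum>S\<in>?Q. prime_set_weight S * (\<Sum>n\<in>{n\<in>{1..K}. \<Prod>S dvd n}. 1 / real n))"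
    by (rule sum_mult_ratio_totient_eq) auto
  also have "\<dots> \<le> (\<Sum>S\<in>?Q. prime_set_weight S * (harm K / real (\<Prod>S)))"
    by (intro sum_mono mult_left_mono sum_inverse_multiples_le prime_set_weight_nonneg)
      (auto dest: subset_primes_leD)
  also have "\<dots> = euler_product K * harm K"
    by (simp add: euler_product_eq_sum sum_distrib_right)
  finally show ?thesis .
qed

lemma finite_tail_sum_le:
  assumes x: "x > 0" and c: "\<And>N. euler_product N \<le> c"
    and F: "finite F" "F \<subseteq> {n. x < real n}"
  obtains D where "finite D" "D \<subseteq> {n. x < real n}" "sum recip_n_totient D \<le> c"
    "sum recip_n_totient F \<le> c / x + c * harm (nat \<lfloor>x\<rfloor>) / x ^ 2 + sum recip_n_totient D / x"
proof
  \<comment> \<open>D consists of the squarefree d > x whose prime factors are at most Max F\<close>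
  let ?Q = "Pow {p. prime p \<and> p \<le> Max F}"
  let ?A = "?Q \<inter> {S. x < real (\<Prod>S)}"
  show "finite (Prod ` ?A)" "Prod ` ?A \<subseteq> {n. x < real n}"
    by auto
  have "(\<Sum>S\<in>?A. prime_set_weight S / real (\<Prod>S)) = (\<Sum>S\<in>?A. recip_n_totient (\<Prod>S))"
    by (intro sum.cong refl recip_n_totient_Prod_primes[symmetric]) (auto dest: subset_primes_leD)
  also have "\<dots> = sum recip_n_totient (Prod ` ?A)"
    by (rule sum.reindex[OF inj_on_subset[OF inj_on_Prod_prime_sets], unfolded o_def, symmetric]) auto
  finally have D: "(\<Sum>S\<in>?A. prime_set_weight S / real (\<Prod>S)) = sum recip_n_totient (Prod ` ?A)" .
  have "sum recip_n_totient (Prod ` ?A) \<le> euler_product (Max F)"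
    unfolding D[symmetric] euler_product_eq_sum
    by (intro sum_mono2) (auto intro!: divide_nonneg_nonneg prime_set_weight_nonneg prod_nonneg
        dest: subset_primes_leD)
  then show "sum recip_n_totient (Prod ` ?A) \<le> c"
    using c[of "Max F"] by linarith
  have "(\<Sum>S\<in>?Q \<inter> {S. real (\<Prod>S) \<le> x}. prime_set_weight S) \<le> c * harm (nat \<lfloor>x\<rfloor>)"
    using sum_weights_le_sum_inverse_totient sum_inverse_totient_le
      mult_right_mono[OF c harm_nonneg] by (meson order.trans)
  then have "(\<Sum>S\<in>?Q \<inter> {S. real (\<Prod>S) \<le> x}. prime_set_weight S) / x ^ 2
               \<le> c * harm (nat \<lfloor>x\<rfloor>) / x ^ 2"
    by (simp add: divide_right_mono)
  moreover have "euler_product (Max F) / x \<le> c / x"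
    using c x by (simp add: divide_right_mono)
  ultimately show "sum recip_n_totient F
      \<le> c / x + c * harm (nat \<lfloor>x\<rfloor>) / x ^ 2 + sum recip_n_totient (Prod ` ?A) / x"
    using sum_recip_n_totient_le[of x F "Max F"] F x unfolding D by force
qed

lemma recip_n_totient_tail_bound:
  assumes x: "x > 1" and c: "\<And>N. euler_product N \<le> c"
  shows "recip_n_totient summable_on {n. x < real n}"
    and "(\<Sum>\<^sub>\<infinity>n\<in>{n. x < real n}. recip_n_totient n) * (x - 1) \<le> c * (1 + harm (nat \<lfloor>x\<rfloor>) / x)"
proof -
  let ?H = "harm (nat \<lfloor>x\<rfloor>) :: real"
  have x0: "0 < x"
    using x by simp
  have nonneg: "recip_n_totient n \<ge> 0" for n
    by (simp add: recip_n_totient_def)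
  show summable: "recip_n_totient summable_on {n. x < real n}"
  proof (rule nonneg_bdd_above_summable_on)
    have "sum recip_n_totient F \<le> c / x + c * ?H / x ^ 2 + c / x"
      if "finite F" "F \<subseteq> {n. x < real n}" for F
      using finite_tail_sum_le[OF x0 c that] x0 by (smt (verit) divide_right_mono)
    then show "bdd_above (sum recip_n_totient ` {F. F \<subseteq> {n. x < real n} \<and> finite F})"
      by (intro bdd_aboveI) auto
  qed (rule nonneg)
  define I where "I = (\<Sum>\<^sub>\<infinity>n\<in>{n. x < real n}. recip_n_totient n)"
  have "I \<le> c / x + c * ?H / x ^ 2 + I / x"
    unfolding I_def
  proof (rule infsum_le_finite_sums[OF summable])
    fix F assume F: "finite F" "F \<subseteq> {n. x < real n}"
    obtain D where "finite D" "D \<subseteq> {n. x < real n}" "sum recip_n_totient D \<le> c"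
      and F_le: "sum recip_n_totient F \<le> c / x + c * ?H / x ^ 2 + sum recip_n_totient D / x"
      by (rule finite_tail_sum_le[OF x0 c F])
    then have "sum recip_n_totient D \<le> infsum recip_n_totient {n. x < real n}"
      using nonneg by (intro finite_sum_le_infsum[OF summable])
    then show "sum recip_n_totient F \<le> c / x + c * ?H / x ^ 2 + infsum recip_n_totient {n. x < real n} / x"
      using F_le x0 by (smt (verit) divide_right_mono)
  qed
  then have "I * x \<le> c + c * ?H / x + I"
    using x0 by (simp add: field_simps power2_eq_square)
  then show "I * (x - 1) \<le> c * (1 + ?H / x)"
    by (simp add: algebra_simps)
qed

(* A form of 1/(n \<phi>(n)) that simp evaluates at numerals n \<le> N. *)
lemma recip_n_totient_eq_prod_primes_upto:
  assumes "0 < n" "n \<le> N"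
  shows "recip_n_totient n =
           (\<Prod>p\<leftarrow>filter (\<lambda>p. p dvd n) (primes_upto N). real p / (real p - 1)) / real n ^ 2"
proof -
  have "prime_factors n = set (filter (\<lambda>p. p dvd n) (primes_upto N))"
    using assms by (auto simp: set_primes_upto prime_factors_dvd dest: dvd_imp_le)
  then have "real n / real (totient n) = (\<Prod>p\<leftarrow>filter (\<lambda>p. p dvd n) (primes_upto N). real p / (real p - 1))"
    unfolding real_div_totient_eq_prod[OF assms(1)] by (simp only: prod.distinct_set_conv_list distinct_filter distinct_primes_upto)
  with assms(1) show ?thesis
    by (simp add: recip_n_totient_def field_simps power2_eq_square)
qed

lemma primes_upto_128:
  "primes_upto 128 = [2, 3, 5, 7, 11, 13, 17, 19, 23, 29, 31, 37, 41, 43, 47, 53, 59, 61, 67, 71, 73, 79, 83,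
    89, 97, 101, 103, 107, 109, 113, 127]"
  by code_simp

(* Carrying the running suffix sum s makes evaluating the check linear in k - k0. *)
fun suffix_sums_below :: "(nat \<Rightarrow> real) \<Rightarrow> (nat \<Rightarrow> real) \<Rightarrow> nat \<Rightarrow> nat \<Rightarrow> real \<Rightarrow> bool" where
  "suffix_sums_below a b k0 k s \<longleftrightarrow>
     s \<le> b k \<and> (if k \<le> k0 then True else suffix_sums_below a b k0 (k - 1) (s + a k))"

declare suffix_sums_below.simps [simp del]

lemma suffix_sums_belowD:
  assumes "suffix_sums_below a b k0 k s"
  shows "s \<le> b k" "k0 < k \<Longrightarrow> suffix_sums_below a b k0 (k - 1) (s + a k)"
  using assms by (subst (asm) suffix_sums_below.simps; simp)+

lemma suffix_sums_below_sound:
  assumes "suffix_sums_below a b k0 k (\<Sum>n\<in>{k<..m}. a n)" "k \<le> m" "k0 \<le> j" "j \<le> k"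
  shows "(\<Sum>n\<in>{j<..m}. a n) \<le> b j"
  using assms
proof (induction k arbitrary: j)
  case (Suc k)
  show ?case
  proof (cases "j = Suc k")
    case True
    with Suc.prems show ?thesis
      by (auto dest: suffix_sums_belowD(1))
  next
    case False
    have "{k<..m} = insert (Suc k) {Suc k<..m}"
      using Suc.prems(2) by auto
    then have "(\<Sum>n\<in>{k<..m}. a n) = (\<Sum>n\<in>{Suc k<..m}. a n) + a (Suc k)"
      by simp
    then show ?thesis
      using Suc.IH suffix_sums_belowD(2)[OF Suc.prems(1)] Suc.prems False by simp
  qed
qed (auto dest: suffix_sums_belowD(1))

(* 0.0161 \<ge> 1.96 * 1.0425 / 127 bounds the tail beyond 128, see tail_sum_beyond_128_le. *)
lemma partial_tail_sums_le:
  assumes "6 \<le> k" "k \<le> 127"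
  shows "(\<Sum>n\<in>{k<..128}. recip_n_totient n) + 0.0161 \<le> 2.1 / (real k + 1)"
proof -
  have "{127<..128::nat} = {128}"
    by auto
  then have "suffix_sums_below recip_n_totient (\<lambda>k. 2.1 / (real k + 1) - 0.0161) 6 127
               (\<Sum>n\<in>{127<..128}. recip_n_totient n)"
    by (simp add: suffix_sums_below.simps recip_n_totient_eq_prod_primes_upto[where N = 128, unfolded primes_upto_128])
  from suffix_sums_below_sound[OF this _ assms] show ?thesis
    by simp
qed

lemma prod_one_plus_inverse_pronic_le:
  assumes "2 \<le> M"
  shows "(\<Prod>n\<in>{M<..N}. 1 + 1 / (real n * (real n - 1))) \<le> real M / (real M - 1)"
proof -
  let ?e = "\<lambda>n::nat. 1 + 1 / (real n * (real n - 1))"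
  let ?C = "real M / (real M - 1)"
  have C: "?C \<ge> 0"
    using assms by simp
  have telescope: "prod ?e {M<..N} \<le> ?C * ((real N - 1) / real N)" if "M \<le> N" for N
    using that
  proof (induction N rule: dec_induct)
    case (step N)
    have N: "real N \<ge> 2"
      using assms step by linarith
    have "{M<..Suc N} = insert (Suc N) {M<..N}"
      using step by auto
    then have "prod ?e {M<..Suc N} = ?e (Suc N) * prod ?e {M<..N}"
      by simp
    also have "\<dots> \<le> ?e (Suc N) * (?C * ((real N - 1) / real N))"
      using N step.IH by (intro mult_left_mono) auto
    also have "\<dots> = ?C * ((real N - 1) / real N * (1 + 1 / ((real N + 1) * real N)))"
      by (simp only: of_nat_Suc add_diff_cancel_right' add.commute[of 1] mult_ac)
    \<comment> \<open>since (N - 1) (N^2 + N + 1) = N^3 - 1\<close>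
    also have "\<dots> \<le> ?C * (real N / (real N + 1))"
      using N by (intro mult_left_mono[OF _ C]) (simp add: divide_simps, simp add: algebra_simps)
    finally show ?case
      by (simp add: add.commute)
  qed (use assms in simp)
  show ?thesis
  proof (cases "M \<le> N")
    case True
    have "?C * ((real N - 1) / real N) \<le> ?C"
      using C True assms by (intro mult_left_le) auto
    with telescope[OF True] show ?thesis
      by linarith
  qed (use assms in simp)
qed

lemma euler_product_le: "euler_product N \<le> 1.96"
proof -
  let ?e = "\<lambda>n::nat. 1 + 1 / (real n * (real n - 1))"
  let ?P = "{p::nat. prime p \<and> p \<le> 128}"
  have e_ge_1: "1 \<le> ?e n" for n
    by (cases n) auto
  have "euler_product N \<le> prod ?e (?P \<union> {128<..N})"
    unfolding euler_product_def by (intro prod_mono2) (auto intro: e_ge_1 order.trans[OF zero_le_one])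
  also have "\<dots> = prod ?e ?P * prod ?e {128<..N}"
    by (intro prod.union_disjoint) auto
  also have "\<dots> \<le> 1.9411 * (128 / 127)"
  proof (intro mult_mono)
    have "?P = set (primes_upto 128)"
      by (auto simp: set_primes_upto)
    then show "prod ?e ?P \<le> 1.9411"
      by (simp add: prod.distinct_set_conv_list primes_upto_128)
    show "prod ?e {128<..N} \<le> 128 / 127"
      using prod_one_plus_inverse_pronic_le[of 128 N] by simp
  qed (auto intro: prod_nonneg order.trans[OF zero_le_one e_ge_1])
  also have "\<dots> \<le> 1.96"
    by simp
  finally show ?thesis .
qed

lemma harm_le_linear:
  assumes "harm m \<le> c * real m" "1 \<le> c * (real m + 1)" "m \<le> K"
  shows "harm K \<le> c * real K"
  using assms(3)
proof (induction K rule: dec_induct)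
  case (step K)
  have "1 / (real K + 1) \<le> 1 / (real m + 1)"
    using step by (intro divide_left_mono) auto
  also have "\<dots> \<le> c"
    using assms(2) by (simp add: divide_le_eq mult.commute)
  finally show ?case
    using step.IH by (simp add: harm_Suc inverse_eq_divide algebra_simps add.commute)
qed (use assms(1) in simp)

lemma tail_sum_beyond_128_le:
  assumes "128 \<le> x"
  shows "recip_n_totient summable_on {n. x < real n}"
    and "(\<Sum>\<^sub>\<infinity>n\<in>{n. x < real n}. recip_n_totient n) * (x - 1) \<le> 1.96 * 1.0425"
proof -
  have x: "1 < x"
    using assms by simp
  have "harm (nat \<lfloor>x\<rfloor>) \<le> 0.0425 * real (nat \<lfloor>x\<rfloor>)"
  proof (rule harm_le_linear)
    show "harm 128 \<le> 0.0425 * real (128::nat)"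
      by (simp add: harm_expand)
  qed (use assms in \<open>simp_all add: le_nat_floor\<close>)
  also have "\<dots> \<le> 0.0425 * x"
    using assms by simp
  finally have "1.96 * (1 + harm (nat \<lfloor>x\<rfloor>) / x) \<le> 1.96 * 1.0425"
    using x by (simp add: divide_le_eq)
  then show "(\<Sum>\<^sub>\<infinity>n\<in>{n. x < real n}. recip_n_totient n) * (x - 1) \<le> 1.96 * 1.0425"
    using recip_n_totient_tail_bound(2)[OF x euler_product_le] by linarith
  show "recip_n_totient summable_on {n. x < real n}"
    using recip_n_totient_tail_bound(1)[OF x euler_product_le] .
qed

lemma tail_sum_lt_large:
  assumes "128 \<le> x"
  shows "(\<Sum>\<^sub>\<infinity>n\<in>{n. x < real n}. recip_n_totient n) < 2.1 / x"
proof -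
  have "0 < x - 1"
    using assms by simp
  then have "(\<Sum>\<^sub>\<infinity>n\<in>{n. x < real n}. recip_n_totient n) \<le> 1.96 * 1.0425 / (x - 1)"
    using tail_sum_beyond_128_le(2)[OF assms] by (subst pos_le_divide_eq)
  also have "\<dots> < 2.1 / x"
    using assms by (simp add: field_simps)
  finally show ?thesis .
qed

lemma tail_sum_lt_small:
  assumes "6 \<le> x" "x < 128"
  shows "(\<Sum>\<^sub>\<infinity>n\<in>{n. x < real n}. recip_n_totient n) < 2.1 / x"
proof -
  define k where "k = nat \<lfloor>x\<rfloor>"
  have k: "real k \<le> x" "x < real k + 1"
    using assms unfolding k_def by linarith+
  then have "6 \<le> k" "k \<le> 127"
    using assms by linarith+
  have "x < real n \<longleftrightarrow> k < n" for n
  proof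
    assume "x < real n"
    then show "k < n"
      using k by simp
  next
    assume "k < n"
    then have "real k + 1 \<le> real n"
      by linarith
    then show "x < real n"
      using k by linarith
  qed
  then have "{n. x < real n} = {n. k < n}"
    by simp
  also have "\<dots> = {k<..128} \<union> {n. 128 < real n}"
    using \<open>k \<le> 127\<close> by auto
  finally have split: "{n. x < real n} = {k<..128} \<union> {n. 128 < real n}" .
  have "(\<Sum>\<^sub>\<infinity>n\<in>{n. 128 < real n}. recip_n_totient n) \<le> 0.0161"
    using tail_sum_beyond_128_le(2)[of 128] by simp
  moreover have "(\<Sum>\<^sub>\<infinity>n\<in>{n. x < real n}. recip_n_totient n) =
      (\<Sum>n\<in>{k<..128}. recip_n_totient n) + (\<Sum>\<^sub>\<infinity>n\<in>{n. 128 < real n}. recip_n_totient n)"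
    unfolding split using tail_sum_beyond_128_le(1)[of 128]
    by (subst infsum_Un_disjoint) auto
  ultimately have "(\<Sum>\<^sub>\<infinity>n\<in>{n. x < real n}. recip_n_totient n) \<le> 2.1 / (real k + 1)"
    using partial_tail_sums_le[OF \<open>6 \<le> k\<close> \<open>k \<le> 127\<close>] by linarith
  also have "\<dots> < 2.1 / x"
    using k assms by (intro divide_strict_left_mono) auto
  finally show ?thesis .
qed

theorem mainTheorem16:
  fixes x :: real
  assumes "x \<ge> 6"
  shows "(\<lambda>n::nat. 1 / (real n * real (totient n))) summable_on {n. real n > x}
         \<and> (\<Sum>\<^sub>\<infinity>n\<in>{n::nat. real n > x}. 1 / (real n * real (totient n))) < 2.1 / x"
proof -
  have "(\<lambda>n::nat. 1 / (real n * real (totient n))) = recip_n_totient"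
    by (simp add: fun_eq_iff recip_n_totient_def)
  moreover have "recip_n_totient summable_on {n. x < real n}"
    using assms by (intro recip_n_totient_tail_bound(1)[OF _ euler_product_le]) simp
  moreover have "(\<Sum>\<^sub>\<infinity>n\<in>{n. x < real n}. recip_n_totient n) < 2.1 / x"
    using assms tail_sum_lt_large tail_sum_lt_small by (cases "x < 128") auto
  ultimately show ?thesis
    by simp
qed

end
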